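(* Let $n\ge 2$. For every $T_1,T_2\in\mathcal{T}_n$, $\mathit{TD}'(T_1,T_2)$ is an even integer smaller than $2n-2$.
   Context: A phylogenetic tree is a finite rooted tree (arcs directed away from the root) with no node of outdegree $1$, whose leaves are injectively labeled. $\mathcal{T}_n$ denotes the set of phylogenetic trees with $n$ leaves labeled $1,\dots,n$, up to label-preserving isomorphism. Internal nodes are the non-leaf nodes; $\mathcal{L}(T)$ is the set of leaves. The height of a node is the length of a longest directed path from it to a leaf. The bottom-up ordering of $T=(V,E)\in\mathcal{T}_n$ is the unique injective map $\ell:V\to\{1,\dots,|V|\}$ such that: (a) for a leaf $v$, $\ell(v)$ is its label; (b) if $\mathrm{height}(u)<\mathrm{height}(v)$ then $\ell(u)<\ell(v)$; (c) if $0<\mathrm{height}(u)=\mathrm{height}(v)$ and $\min\{\ell(x): x \text{ child of } u\}<\min\{\ell(x): x\text{ child of } v\}$ then $\ell(u)<\ell(v)$. For a subset $S=\{i_1<\dots<i_k\}$ with $k\ge 2$, $\kappa(S)$ is the cyclic permutation $(i_1,i_2,\dots,i_k)$. The matching permutation of $T$ is $\pi(T)=\prod_{u\in V\setminus\mathcal{L}(T)}\kappa(\ell(\mathrm{children}(u)))$, regarded as an element of $\mathfrak{S}_{2n-2}$ fixing $|V|,\dots,2n-2$. Permutations are composed right to left. $\mathit{TD}'(T_1,T_2)$ is the least number of transpositions whose product is $\pi(T_2)^{-1}\pi(T_1)$ (zero if this is the identity). *)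

theory Defs
  imports Main "HOL-Combinatorics.Cycles"
begin

text \<open>A rooted tree is given by a finite vertex set V, an arc relation E (arcs
  directed away from the root) and a leaf labelling lab.\<close>

definition children :: "('a \<times> 'a) set \<Rightarrow> 'a \<Rightarrow> 'a set" where
  "children E u = {w. (u, w) \<in> E}"

definition leaves :: "'a set \<Rightarrow> ('a \<times> 'a) set \<Rightarrow> 'a set" where
  "leaves V E = {v \<in> V. children E v = {}}"

definition phylo_tree :: "nat \<Rightarrow> 'a set \<Rightarrow> ('a \<times> 'a) set \<Rightarrow> ('a \<Rightarrow> nat) \<Rightarrow> bool" where
  "phylo_tree n V E lab \<longleftrightarrow>
     finite V \<and> E \<subseteq> V \<times> V \<and>
     (\<exists>r\<in>V. (\<forall>v. (v, r) \<notin> E) \<and> (\<forall>v\<in>V - {r}. \<exists>!u. (u, v) \<in> E) \<and> (\<forall>v\<in>V. (r, v) \<in> E\<^sup>*)) \<and>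
     (\<forall>v\<in>V. card (children E v) \<noteq> 1) \<and>
     bij_betw lab (leaves V E) {1..n}"

definition height :: "('a \<times> 'a) set \<Rightarrow> 'a \<Rightarrow> nat" where
  "height E v = Max {k. \<exists>w. (v, w) \<in> E ^^ k}"

definition is_bottom_up :: "'a set \<Rightarrow> ('a \<times> 'a) set \<Rightarrow> ('a \<Rightarrow> nat) \<Rightarrow> ('a \<Rightarrow> nat) \<Rightarrow> bool" where
  "is_bottom_up V E lab lo \<longleftrightarrow>
     inj_on lo V \<and> lo ` V \<subseteq> {1..card V} \<and> (\<forall>v. v \<notin> V \<longrightarrow> lo v = 0) \<and>
     (\<forall>v\<in>leaves V E. lo v = lab v) \<and>
     (\<forall>u\<in>V. \<forall>v\<in>V. height E u < height E v \<longrightarrow> lo u < lo v) \<and>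
     (\<forall>u\<in>V. \<forall>v\<in>V. 0 < height E u \<and> height E u = height E v \<and>
        Min (lo ` children E u) < Min (lo ` children E v) \<longrightarrow> lo u < lo v)"

definition bottom_up :: "'a set \<Rightarrow> ('a \<times> 'a) set \<Rightarrow> ('a \<Rightarrow> nat) \<Rightarrow> 'a \<Rightarrow> nat" where
  "bottom_up V E lab = (THE lo. is_bottom_up V E lab lo)"

definition kappa :: "nat set \<Rightarrow> nat \<Rightarrow> nat" where
  "kappa S = cycle_of_list (sorted_list_of_set S)"

text \<open>Matching permutation: product (composition, right to left) of the cycles
  kappa(l(children u)) over all internal nodes u (taken in order of their labels;
  the cycles are disjoint, so the order is immaterial).\<close>
definition match_perm :: "'a set \<Rightarrow> ('a \<times> 'a) set \<Rightarrow> ('a \<Rightarrow> nat) \<Rightarrow> nat \<Rightarrow> nat" where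
  "match_perm V E lab =
     (let lo = bottom_up V E lab
      in foldr (\<lambda>k f. kappa (lo ` children E (inv_into V lo k)) \<circ> f)
           (sorted_list_of_set (lo ` (V - leaves V E))) id)"

definition trans_dist :: "nat \<Rightarrow> (nat \<Rightarrow> nat) \<Rightarrow> nat" where
  "trans_dist n p = (LEAST k. \<exists>ts :: (nat \<times> nat) list. length ts = k \<and>
      (\<forall>(a, b) \<in> set ts. a \<noteq> b \<and> a \<in> {1..2*n-2} \<and> b \<in> {1..2*n-2}) \<and>
      foldr (\<lambda>(a, b) f. transpose a b \<circ> f) ts id = p)"

definition TD' :: "nat \<Rightarrow> 'a set \<times> ('a \<times> 'a) set \<times> ('a \<Rightarrow> nat) \<Rightarrow>
    'b set \<times> ('b \<times> 'b) set \<times> ('b \<Rightarrow> nat) \<Rightarrow> nat" where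
  "TD' n T1 T2 = (case T1 of (V1, E1, lab1) \<Rightarrow> case T2 of (V2, E2, lab2) \<Rightarrow>
      trans_dist n (inv (match_perm V2 E2 lab2) \<circ> match_perm V1 E1 lab1))"

end

(* The bottom-up ordering l is the unique fixpoint of the operator that ranks the nodes
   lexicographically by height and by the least value of their children (leaves by their
   label). Ranks at height h only depend on values strictly below h, so the fixpoint can be
   built, and is determined, level by level. Every non-root node gets a value below
   l(root) <= |V| <= 2n - 1, hence pi(T) permutes {1..2n-2}. The cycle of an internal node u
   is a product of |children u| - 1 transpositions and these numbers add up to n - 1, so
   pi(T1) and pi(T2) have the same parity and pi(T2)^-1 pi(T1) is even. An even permutation
   of a (2n-2)-element set is a product of at most 2n-3 transpositions, and every
   factorisation of it into transpositions has even length. *)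

theory Submission
  imports Defs "HOL-Library.Product_Lexorder"
begin

lemma card_below_mono:
  fixes g :: "'a \<Rightarrow> 'b::order"
  assumes "finite A" and "u \<in> A" and "g u < g v"
  shows "card {x\<in>A. g x < g u} < card {x\<in>A. g x < g v}"
proof (rule psubset_card_mono)
  show "{x\<in>A. g x < g u} \<subset> {x\<in>A. g x < g v}"
    using assms(2,3) by (auto intro: less_trans)
qed (use assms(1) in simp)

lemma card_below_less_card:
  fixes g :: "'a \<Rightarrow> 'b::order"
  assumes "finite A" and "v \<in> A"
  shows "card {x\<in>A. g x < g v} < card A"
  using assms by (intro psubset_card_mono) auto

lemma bij_betw_eq_Suc_card_below:
  assumes "bij_betw f A {1..m}" and "v \<in> A"
  shows "f v = Suc (card {u\<in>A. f u < f v})"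
proof -
  have fv: "f v \<in> {1..m}"
    using assms by (auto simp: bij_betw_def)
  have "f ` {u\<in>A. f u < f v} = {1..<f v}"
  proof
    show "{1..<f v} \<subseteq> f ` {u\<in>A. f u < f v}"
    proof
      fix x assume x: "x \<in> {1..<f v}"
      with fv have "x \<in> f ` A"
        using assms(1) by (auto simp: bij_betw_def)
      with x show "x \<in> f ` {u\<in>A. f u < f v}" by auto
    qed
  qed (use assms(1) in \<open>auto simp: bij_betw_def\<close>)
  moreover have "inj_on f {u\<in>A. f u < f v}"
    using assms(1) by (auto simp: bij_betw_def intro: inj_on_subset)
  ultimately have "card {u\<in>A. f u < f v} = card {1..<f v}"
    by (metis card_image)
  with fv show ?thesis by simp
qed

section \<open>Permutations and the transposition distance\<close>

lemma swapidseq_cycle_of_list: "distinct cs \<Longrightarrow> swapidseq (length cs - 1) (cycle_of_list cs)"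
proof (induction cs rule: cycle_of_list.induct)
  case (1 i j cs)
  then have "swapidseq (Suc (length cs)) (transpose i j \<circ> cycle_of_list (j # cs))"
    by (intro swapidseq.comp_Suc) auto
  then show ?case
    by (subst cycle_of_list.simps) (simp only: length_Cons diff_Suc_1)
qed simp_all

lemma swapidseq_kappa: "finite S \<Longrightarrow> swapidseq (card S - 1) (kappa S)"
  unfolding kappa_def using swapidseq_cycle_of_list[of "sorted_list_of_set S"] by simp

lemma kappa_permutes: "finite S \<Longrightarrow> kappa S permutes S"
  unfolding kappa_def using cycle_permutes[of "sorted_list_of_set S"] by simp

lemma swapidseq_foldr_comp:
  "(\<And>k. k \<in> set ks \<Longrightarrow> swapidseq (c k) (P k))
    \<Longrightarrow> swapidseq (\<Sum>k\<leftarrow>ks. c k) (foldr (\<lambda>k f. P k \<circ> f) ks id)"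
  by (induction ks) (auto intro: swapidseq_comp_add)

lemma permutes_foldr_comp:
  "(\<And>k. k \<in> set ks \<Longrightarrow> P k permutes S) \<Longrightarrow> foldr (\<lambda>k f. P k \<circ> f) ks id permutes S"
  by (induction ks) (auto intro: permutes_compose permutes_id)

lemma evenperm_inv_comp:
  assumes "swapidseq m p" and "swapidseq m q"
  shows "evenperm (inv q \<circ> p)"
proof -
  have "permutation p" "permutation q"
    using assms unfolding permutation_def by blast+
  then have "evenperm (inv q \<circ> p) \<longleftrightarrow> evenperm q = evenperm p"
    by (simp add: evenperm_comp evenperm_inv permutation_inverse)
  with evenperm_unique[OF assms(1) refl] evenperm_unique[OF assms(2) refl] show ?thesis
    by simp
qed

lemma permutes_from_few_transpositions:
  assumes "finite S" and "p permutes S"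
  shows "\<exists>ts. length ts \<le> card S - 1 \<and> (\<forall>(a, b)\<in>set ts. a \<noteq> b \<and> a \<in> S \<and> b \<in> S)
           \<and> apply_transps ts = p"
  using assms
proof (induction S arbitrary: p rule: finite_induct)
  case empty
  then show ?case
    by (intro exI[of _ "[]"]) simp
next
  case (insert a F)
  let ?q = "transpose a (p a) \<circ> p"
  have "?q permutes F"
    using permutes_insert_lemma[OF insert.prems] .
  with insert.IH obtain ts where ts: "length ts \<le> card F - 1"
    "\<forall>(x, y)\<in>set ts. x \<noteq> y \<and> x \<in> F \<and> y \<in> F" "apply_transps ts = ?q"
    by blast
  have card: "card (insert a F) = Suc (card F)"
    using insert.hyps by simp
  show ?case
  proof (cases "p a = a")
    case True
    with ts card show ?thesis
      by (intro exI[of _ ts]) auto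
  next
    case False
    with permutes_in_image[OF insert.prems, of a] have "p a \<in> F"
      by simp
    then have "card F \<ge> 1"
      using insert.hyps(1) card_0_eq by fastforce
    have "apply_transps ((a, p a) # ts) = p"
      using ts(3) by (simp add: o_assoc)
    with ts card False \<open>p a \<in> F\<close> \<open>card F \<ge> 1\<close> show ?thesis
      by (intro exI[of _ "(a, p a) # ts"]) auto
  qed
qed

lemma foldr_transpose_eq_apply_transps:
  "foldr (\<lambda>(a, b) f. transpose a b \<circ> f) ts id = apply_transps ts"
  by (induction ts) auto

lemma trans_dist_permutes:
  assumes "p permutes {1..2 * n - 2}"
  shows "trans_dist n p \<le> 2 * n - 3" and "even (trans_dist n p) \<longleftrightarrow> evenperm p"
proof -
  let ?S = "{1..2 * n - 2}"
  define P where "P k \<longleftrightarrow> (\<exists>ts. length ts = k \<and> (\<forall>(a, b)\<in>set ts. a \<noteq> b \<and> a \<in> ?S \<and> b \<in> ?S)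
    \<and> apply_transps ts = p)" for k
  have td: "trans_dist n p = (LEAST k. P k)"
    unfolding trans_dist_def P_def foldr_transpose_eq_apply_transps ..
  obtain ts0 where ts0: "length ts0 \<le> card ?S - 1"
    "\<forall>(a, b)\<in>set ts0. a \<noteq> b \<and> a \<in> ?S \<and> b \<in> ?S" "apply_transps ts0 = p"
    using permutes_from_few_transpositions[OF _ assms] by auto
  then have "P (length ts0)"
    unfolding P_def by blast
  with ts0(1) show "trans_dist n p \<le> 2 * n - 3"
    unfolding td using Least_le[of P "length ts0"] by simp
  from \<open>P (length ts0)\<close> have "P (trans_dist n p)"
    unfolding td by (rule LeastI)
  then obtain ts where "length ts = trans_dist n p" "\<forall>(a, b)\<in>set ts. a \<noteq> b" "apply_transps ts = p"
    unfolding P_def by auto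
  then show "even (trans_dist n p) \<longleftrightarrow> evenperm p"
    using evenperm_apply_transps_iff by metis
qed

section \<open>Rooted trees\<close>

locale rooted_tree =
  fixes V :: "'a set" and E :: "('a \<times> 'a) set" and root :: 'a
  assumes finite_V: "finite V"
    and arcs_in_V: "E \<subseteq> V \<times> V"
    and root_in_V: "root \<in> V"
    and root_no_parent: "(v, root) \<notin> E"
    and unique_parent: "v \<in> V - {root} \<Longrightarrow> \<exists>!u. (u, v) \<in> E"
    and root_reaches: "v \<in> V \<Longrightarrow> (root, v) \<in> E\<^sup>*"
begin

lemma relpow_target_in_V: "u \<in> V \<Longrightarrow> (u, w) \<in> E ^^ k \<Longrightarrow> w \<in> V"
  using arcs_in_V by (cases k) auto

lemma root_path_length_unique: "(root, v) \<in> E ^^ k \<Longrightarrow> (root, v) \<in> E ^^ j \<Longrightarrow> k = j"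
proof (induction k arbitrary: v j)
  case 0
  then show ?case
    using root_no_parent by (cases j) auto
next
  case (Suc k)
  from Suc.prems(1) obtain y where y: "(root, y) \<in> E ^^ k" "(y, v) \<in> E" by auto
  then have v: "v \<in> V - {root}"
    using arcs_in_V root_no_parent by auto
  show ?case
  proof (cases j)
    case 0
    with Suc.prems(2) v show ?thesis by simp
  next
    case (Suc j')
    with Suc.prems(2) obtain y' where y': "(root, y') \<in> E ^^ j'" "(y', v) \<in> E" by auto
    from unique_parent[OF v] y(2) y'(2) have "y = y'" by blast
    with Suc.IH[OF y(1)] y'(1) Suc show ?thesis by simp
  qed
qed

lemma finite_root_path_lengths: "finite {k. \<exists>w. (root, w) \<in> E ^^ k}"
proof -
  have "{k. \<exists>w. (root, w) \<in> E ^^ k} \<subseteq> (\<lambda>w. THE k. (root, w) \<in> E ^^ k) ` V"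
  proof
    fix k assume "k \<in> {k. \<exists>w. (root, w) \<in> E ^^ k}"
    then obtain w where w: "(root, w) \<in> E ^^ k" by blast
    then have "k = (THE k. (root, w) \<in> E ^^ k)"
      using root_path_length_unique by (metis the_equality)
    with relpow_target_in_V[OF root_in_V w] show "k \<in> (\<lambda>w. THE k. (root, w) \<in> E ^^ k) ` V"
      by (rule rev_image_eqI)
  qed
  then show ?thesis
    by (rule finite_surj[OF finite_V])
qed

lemma finite_path_lengths:
  assumes "u \<in> V"
  shows "finite {k. \<exists>w. (u, w) \<in> E ^^ k}"
proof -
  obtain d where d: "(root, u) \<in> E ^^ d"
    using root_reaches[OF assms] by (metis rtrancl_power)
  let ?R = "{k. \<exists>w. (root, w) \<in> E ^^ k}"
  have "{k. \<exists>w. (u, w) \<in> E ^^ k} \<subseteq> {..Max ?R}"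
  proof
    fix k assume "k \<in> {k. \<exists>w. (u, w) \<in> E ^^ k}"
    then obtain w where "(u, w) \<in> E ^^ k" by blast
    with d have "d + k \<in> ?R"
      by (auto simp: relpow_add)
    from Max_ge[OF finite_root_path_lengths this] show "k \<in> {..Max ?R}"
      by simp
  qed
  then show ?thesis
    using finite_subset by blast
qed

lemma path_length_le_height: "u \<in> V \<Longrightarrow> (u, w) \<in> E ^^ k \<Longrightarrow> k \<le> height E u"
  unfolding height_def using finite_path_lengths by (auto intro: Max_ge)

lemma path_of_height: "u \<in> V \<Longrightarrow> \<exists>w. (u, w) \<in> E ^^ height E u"
proof -
  assume "u \<in> V"
  moreover have "{k. \<exists>w. (u, w) \<in> E ^^ k} \<noteq> {}"
    by (metis (mono_tags) empty_Collect_eq relpow_0_I)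
  ultimately have "height E u \<in> {k. \<exists>w. (u, w) \<in> E ^^ k}"
    unfolding height_def using finite_path_lengths by (intro Max_in)
  then show ?thesis by simp
qed

lemma height_child_less: "(u, c) \<in> E \<Longrightarrow> height E c < height E u"
proof -
  assume uc: "(u, c) \<in> E"
  then have "u \<in> V" "c \<in> V"
    using arcs_in_V by auto
  obtain w where "(c, w) \<in> E ^^ height E c"
    using path_of_height[OF \<open>c \<in> V\<close>] by blast
  with uc have "(u, w) \<in> E ^^ Suc (height E c)"
    by (rule relpow_Suc_I2)
  from path_length_le_height[OF \<open>u \<in> V\<close> this] show ?thesis by simp
qed

lemma height_eq_0_iff: "v \<in> V \<Longrightarrow> height E v = 0 \<longleftrightarrow> children E v = {}"
proof
  assume "height E v = 0"
  then show "children E v = {}"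
    using height_child_less unfolding children_def by fastforce
next
  assume v: "v \<in> V" and "children E v = {}"
  then have "(v, w) \<notin> E ^^ Suc k" for w k
    unfolding children_def by (metis empty_iff mem_Collect_eq relpow_Suc_D2)
  then show "height E v = 0"
    using path_of_height[OF v] by (cases "height E v") auto
qed

lemma height_less_root: "v \<in> V \<Longrightarrow> v \<noteq> root \<Longrightarrow> height E v < height E root"
proof -
  assume v: "v \<in> V" "v \<noteq> root"
  obtain k where k: "(root, v) \<in> E ^^ k"
    using root_reaches[OF v(1)] by (metis rtrancl_power)
  with v(2) have "k \<noteq> 0" by (cases k) auto
  obtain w where "(v, w) \<in> E ^^ height E v"
    using path_of_height[OF v(1)] by blast
  with k have "(root, w) \<in> E ^^ (k + height E v)"
    by (auto simp: relpow_add)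
  from path_length_le_height[OF root_in_V this] \<open>k \<noteq> 0\<close> show ?thesis by simp
qed

lemma children_subset: "children E u \<subseteq> V - {root}"
  using arcs_in_V root_no_parent unfolding children_def by auto

lemma finite_children: "finite (children E u)"
  using children_subset finite_V finite_subset by blast

lemma children_disjoint:
  assumes "u \<noteq> u'"
  shows "children E u \<inter> children E u' = {}"
proof (rule ccontr)
  assume "children E u \<inter> children E u' \<noteq> {}"
  then obtain c where uc: "(u, c) \<in> E" and "(u', c) \<in> E"
    unfolding children_def by auto
  moreover from uc have "c \<in> V - {root}"
    using arcs_in_V root_no_parent by auto
  ultimately show False
    using unique_parent assms by blast
qed

lemma sum_card_children: "(\<Sum>u\<in>V. card (children E u)) = card V - 1"
proof -
  have "(\<Union>u\<in>V. children E u) = V - {root}"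
  proof
    show "V - {root} \<subseteq> (\<Union>u\<in>V. children E u)"
    proof
      fix v assume "v \<in> V - {root}"
      then obtain u where "(u, v) \<in> E"
        using unique_parent by blast
      then show "v \<in> (\<Union>u\<in>V. children E u)"
        using arcs_in_V unfolding children_def by auto
    qed
  qed (use children_subset in auto)
  moreover have "card (\<Union>u\<in>V. children E u) = (\<Sum>u\<in>V. card (children E u))"
    using finite_V finite_children children_disjoint by (intro card_UN_disjoint) auto
  ultimately show ?thesis
    using root_in_V finite_V by simp
qed

end

locale phylogeny = rooted_tree V E root
  for V :: "'a set" and E and root +
  fixes n :: nat and lab :: "'a \<Rightarrow> nat"
  assumes no_unary_node: "v \<in> V \<Longrightarrow> card (children E v) \<noteq> 1"
    and leaf_labelling: "bij_betw lab (leaves V E) {1..n}"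

lemma phylo_tree_imp_phylogeny:
  assumes "phylo_tree n V E lab"
  obtains r where "phylogeny V E r n lab"
proof -
  from assms obtain r where "r \<in> V" "\<forall>v. (v, r) \<notin> E" "\<forall>v\<in>V - {r}. \<exists>!u. (u, v) \<in> E"
    "\<forall>v\<in>V. (r, v) \<in> E\<^sup>*"
    unfolding phylo_tree_def by auto
  with assms have "phylogeny V E r n lab"
    unfolding phylo_tree_def by unfold_locales auto
  then show ?thesis by (rule that)
qed

context phylogeny
begin

lemma two_le_card_children:
  assumes "v \<in> V - leaves V E"
  shows "2 \<le> card (children E v)"
proof -
  have "card (children E v) \<noteq> 0"
    using assms finite_children unfolding leaves_def by auto
  moreover have "card (children E v) \<noteq> 1"
    using assms no_unary_node by blast
  ultimately show ?thesis by linarith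
qed

lemma sum_internal_children: "(\<Sum>u\<in>V - leaves V E. card (children E u) - 1) = n - 1"
  and card_V_less: "card V < 2 * n"
proof -
  let ?I = "V - leaves V E"
  have leaves_V: "leaves V E \<subseteq> V"
    unfolding leaves_def by auto
  have card_V: "card V = card ?I + n"
    using card_Diff_subset[OF finite_subset[OF leaves_V finite_V] leaves_V]
      card_mono[OF finite_V leaves_V] bij_betw_same_card[OF leaf_labelling] by simp
  have "(\<Sum>u\<in>V. card (children E u)) = (\<Sum>u\<in>?I. card (children E u))"
    using finite_V by (intro sum.mono_neutral_right) (auto simp: leaves_def)
  then have sum_I: "(\<Sum>u\<in>?I. card (children E u)) = card ?I + n - 1"
    using sum_card_children card_V by simp
  have "card V \<ge> 1"
    using root_in_V finite_V by (metis One_nat_def Suc_leI card_gt_0_iff empty_iff)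
  moreover have "2 * card ?I \<le> card ?I + n - 1"
    using sum_mono[of ?I "\<lambda>_. 2" "\<lambda>u. card (children E u)"] two_le_card_children sum_I by simp
  ultimately show "card V < 2 * n"
    using card_V by linarith
  have "(\<Sum>u\<in>?I. card (children E u) - 1) = (\<Sum>u\<in>?I. card (children E u)) - (\<Sum>u\<in>?I. 1)"
    by (rule sum_subtractf_nat) (use two_le_card_children in force)
  then show "(\<Sum>u\<in>?I. card (children E u) - 1) = n - 1"
    using sum_I by simp
qed

section \<open>The bottom-up ordering\<close>

definition bu_key :: "('a \<Rightarrow> nat) \<Rightarrow> 'a \<Rightarrow> nat \<times> nat" where
  "bu_key f v = (height E v, if children E v = {} then lab v else Min (f ` children E v))"

definition bu_rank :: "('a \<Rightarrow> nat) \<Rightarrow> 'a \<Rightarrow> nat" where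
  "bu_rank f v = (if v \<in> V then Suc (card {u\<in>V. bu_key f u < bu_key f v}) else 0)"

lemma bu_key_cong: "(\<And>c. c \<in> children E v \<Longrightarrow> f c = g c) \<Longrightarrow> bu_key f v = bu_key g v"
  unfolding bu_key_def by (simp cong: image_cong)

lemma bu_rank_cong:
  assumes agree: "\<And>u. u \<in> V \<Longrightarrow> height E u < h \<Longrightarrow> f u = g u" and v: "height E v \<le> h"
  shows "bu_rank f v = bu_rank g v"
proof -
  have key: "bu_key f u = bu_key g u" if "height E u \<le> h" for u
  proof (rule bu_key_cong)
    fix c assume c: "c \<in> children E u"
    then have "c \<in> V" and "height E c < height E u"
      using children_subset height_child_less unfolding children_def by auto
    with that show "f c = g c"
      using agree by simp
  qed
  have "bu_key f u < bu_key f v \<longleftrightarrow> bu_key g u < bu_key g v" for u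
  proof (cases "height E u \<le> h")
    case True
    then show ?thesis using key v by simp
  next
    case False
    then show ?thesis using v by (simp add: bu_key_def)
  qed
  then show ?thesis
    unfolding bu_rank_def by simp
qed

lemma bu_rank_fixpoint_unique:
  assumes f: "bu_rank f = f" and g: "bu_rank g = g"
  shows "f = g"
proof
  have "\<forall>v\<in>V. height E v < h \<longrightarrow> f v = g v" for h
  proof (induction h)
    case (Suc h)
    have "bu_rank f v = bu_rank g v" if "height E v \<le> h" for v
      using Suc.IH that by (intro bu_rank_cong[of h]) auto
    with f g show ?case
      by (simp add: less_Suc_eq_le)
  qed simp
  then have "v \<in> V \<Longrightarrow> f v = g v" for v
    by blast
  moreover have "v \<notin> V \<Longrightarrow> f v = g v" for v
    using bu_rank_def[of f v] bu_rank_def[of g v] f g by simp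
  ultimately show "f v = g v" for v
    by blast
qed

lemma bu_rank_fixpoint_exists: "\<exists>f. bu_rank f = f"
proof
  define F where "F k = (bu_rank ^^ k) (\<lambda>_. 0)" for k
  have F_Suc: "F (Suc k) = bu_rank (F k)" for k
    unfolding F_def by simp
  have stable: "\<forall>v\<in>V. height E v < k \<longrightarrow> F k v = F (Suc k) v" for k
  proof (induction k)
    case (Suc k)
    have "bu_rank (F k) v = bu_rank (F (Suc k)) v" if "height E v \<le> k" for v
      using Suc.IH that by (intro bu_rank_cong[of k]) auto
    then show ?case
      by (simp add: F_Suc less_Suc_eq_le)
  qed simp
  let ?H = "Suc (height E root)"
  show "bu_rank (F ?H) = F ?H"
  proof
    fix v
    show "bu_rank (F ?H) v = F ?H v"
    proof (cases "v \<in> V")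
      case True
      then have "height E v < ?H"
        using height_less_root by (cases "v = root") fastforce+
      with True stable[of ?H] show ?thesis
        by (simp add: F_Suc)
    next
      case False
      then show ?thesis
        by (simp add: F_Suc bu_rank_def)
    qed
  qed
qed

lemma bu_rank_mono:
  "u \<in> V \<Longrightarrow> v \<in> V \<Longrightarrow> bu_key f u < bu_key f v \<Longrightarrow> bu_rank f u < bu_rank f v"
  unfolding bu_rank_def using card_below_mono[OF finite_V] by simp

lemma bu_key_inj:
  assumes u: "u \<in> V" and v: "v \<in> V" and inj: "inj_on f (children E u \<union> children E v)"
    and eq: "bu_key f u = bu_key f v"
  shows "u = v"
proof -
  have "height E u = height E v"
    using eq by (simp add: bu_key_def)
  with u v have leaf_iff: "children E u = {} \<longleftrightarrow> children E v = {}"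
    using height_eq_0_iff by metis
  show ?thesis
  proof (cases "children E u = {}")
    case True
    with leaf_iff eq u v have "u \<in> leaves V E" "v \<in> leaves V E" "lab u = lab v"
      by (simp_all add: bu_key_def leaves_def)
    then show ?thesis
      using leaf_labelling by (auto simp: bij_betw_def dest: inj_onD)
  next
    case False
    with leaf_iff have ne: "children E v \<noteq> {}"
      by simp
    have "Min (f ` children E u) \<in> f ` children E u"
      using Min_in[of "f ` children E u"] False finite_children by blast
    then obtain c where c: "c \<in> children E u" "Min (f ` children E u) = f c"
      by blast
    have "Min (f ` children E v) \<in> f ` children E v"
      using Min_in[of "f ` children E v"] ne finite_children by blast
    then obtain c' where c': "c' \<in> children E v" "Min (f ` children E v) = f c'"
      by blast
    from False ne eq have "Min (f ` children E u) = Min (f ` children E v)"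
      by (simp add: bu_key_def)
    with c c' inj have "c = c'"
      by (auto dest: inj_onD)
    with c(1) c'(1) children_disjoint show "u = v"
      by blast
  qed
qed

lemma bu_rank_fixpoint_inj:
  assumes fp: "bu_rank f = f"
  shows "inj_on f V"
proof -
  have below: "\<forall>u\<in>V. \<forall>v\<in>V. height E u < h \<longrightarrow> f u = f v \<longrightarrow> u = v" for h
  proof (induction h)
    case (Suc h)
    show ?case
    proof (intro ballI impI)
      fix u v assume u: "u \<in> V" and v: "v \<in> V" and hu: "height E u < Suc h" and f_eq: "f u = f v"
      have "\<not> bu_key f u < bu_key f v" "\<not> bu_key f v < bu_key f u"
        using bu_rank_mono[OF u v, of f] bu_rank_mono[OF v u, of f] fp f_eq by auto
      then have key_eq: "bu_key f u = bu_key f v"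
        by (meson linorder_neqE)
      then have "height E v = height E u"
        by (simp add: bu_key_def)
      then have low: "c \<in> V \<and> height E c < h" if "c \<in> children E u \<union> children E v" for c
        using that hu height_child_less children_subset unfolding children_def by fastforce
      have "inj_on f (children E u \<union> children E v)"
      proof (rule inj_onI)
        fix c c' assume "c \<in> children E u \<union> children E v" "c' \<in> children E u \<union> children E v"
          and "f c = f c'"
        with low Suc.IH show "c = c'" by blast
      qed
      from bu_key_inj[OF u v this key_eq] show "u = v" .
    qed
  qed simp
  show ?thesis
  proof (rule inj_onI)
    fix u v assume "u \<in> V" "v \<in> V" "f u = f v"
    with below[of "Suc (height E u)"] show "u = v" by blast
  qed
qed

lemma bu_rank_fixpoint_leaf:
  assumes fp: "bu_rank f = f" and leaf: "v \<in> leaves V E"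
  shows "f v = lab v"
proof -
  have v: "v \<in> V" "height E v = 0" "children E v = {}"
    using leaf height_eq_0_iff unfolding leaves_def by auto
  have "bu_key f u < bu_key f v \<longleftrightarrow> children E u = {} \<and> lab u < lab v" if "u \<in> V" for u
    using v height_eq_0_iff[OF that] by (auto simp: bu_key_def)
  then have "{u\<in>V. bu_key f u < bu_key f v} = {u\<in>leaves V E. lab u < lab v}"
    unfolding leaves_def by blast
  then have "f v = Suc (card {u\<in>leaves V E. lab u < lab v})"
    using bu_rank_def[of f v] fp v(1) by simp
  also have "\<dots> = lab v"
    using bij_betw_eq_Suc_card_below[OF leaf_labelling leaf] by simp
  finally show ?thesis .
qed

lemma bu_rank_fixpoint_is_bottom_up:
  assumes fp: "bu_rank f = f"
  shows "is_bottom_up V E lab f"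
  unfolding is_bottom_up_def
proof (intro conjI ballI allI impI)
  show "inj_on f V"
    using bu_rank_fixpoint_inj[OF fp] .
  show "f ` V \<subseteq> {1..card V}"
  proof
    fix x assume "x \<in> f ` V"
    then obtain v where v: "v \<in> V" and "x = bu_rank f v"
      using fp by auto
    with card_below_less_card[OF finite_V v, of "bu_key f"] show "x \<in> {1..card V}"
      by (simp add: bu_rank_def)
  qed
  show "v \<notin> V \<Longrightarrow> f v = 0" for v
    using bu_rank_def[of f v] fp by simp
  show "f v = lab v" if "v \<in> leaves V E" for v
    using bu_rank_fixpoint_leaf[OF fp that] .
  show "f u < f v" if "u \<in> V" "v \<in> V" "height E u < height E v" for u v
    using bu_rank_mono[of u v f] that fp by (simp add: bu_key_def)
  show "f u < f v" if "u \<in> V" "v \<in> V"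
    and "0 < height E u \<and> height E u = height E v \<and> Min (f ` children E u) < Min (f ` children E v)"
  for u v
  proof -
    have "children E u \<noteq> {}" "children E v \<noteq> {}"
      using that(3) height_eq_0_iff[OF that(1)] height_eq_0_iff[OF that(2)] by auto
    with that have "bu_key f u < bu_key f v"
      by (simp add: bu_key_def)
    from bu_rank_mono[OF that(1,2) this] fp show ?thesis
      by simp
  qed
qed

lemma is_bottom_up_key_mono:
  assumes bu: "is_bottom_up V E lab f" and u: "u \<in> V" and v: "v \<in> V"
    and less: "bu_key f u < bu_key f v"
  shows "f u < f v"
proof -
  have "height E u \<le> height E v"
    using less by (auto simp: bu_key_def)
  then consider (lower) "height E u < height E v"
    | (leaves) "height E u = height E v" "children E u = {}" "children E v = {}"
    | (internal) "height E u = height E v" "children E u \<noteq> {}" "children E v \<noteq> {}"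
    using height_eq_0_iff[OF u] height_eq_0_iff[OF v] by (cases "height E u < height E v") auto
  then show ?thesis
  proof cases
    case lower
    with bu u v show ?thesis
      unfolding is_bottom_up_def by blast
  next
    case leaves
    with less have "lab u < lab v"
      by (simp add: bu_key_def)
    moreover have "u \<in> leaves V E" "v \<in> leaves V E"
      using leaves u v unfolding leaves_def by auto
    ultimately show ?thesis
      using bu unfolding is_bottom_up_def by auto
  next
    case internal
    with less have "Min (f ` children E u) < Min (f ` children E v)"
      by (simp add: bu_key_def)
    moreover have "0 < height E u"
      using internal height_eq_0_iff[OF u] by simp
    ultimately show ?thesis
      using bu u v internal(1) unfolding is_bottom_up_def by blast
  qed
qed

lemma is_bottom_up_bu_rank_fixpoint:
  assumes bu: "is_bottom_up V E lab f"
  shows "bu_rank f = f"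
proof
  fix v
  have inj: "inj_on f V" and range: "f ` V \<subseteq> {1..card V}" and outside: "v \<notin> V \<Longrightarrow> f v = 0"
    using bu unfolding is_bottom_up_def by auto
  show "bu_rank f v = f v"
  proof (cases "v \<in> V")
    case True
    have "f ` V = {1..card V}"
      using range inj finite_V by (intro card_subset_eq) (auto simp: card_image)
    with inj have "bij_betw f V {1..card V}"
      by (simp add: bij_betw_def)
    from bij_betw_eq_Suc_card_below[OF this True]
    have "f v = Suc (card {u\<in>V. f u < f v})" .
    also have "{u\<in>V. f u < f v} = {u\<in>V. bu_key f u < bu_key f v}"
    proof (intro Collect_cong conj_cong refl iffI)
      fix u assume u: "u \<in> V" and "f u < f v"
      then have "\<not> bu_key f v < bu_key f u" "u \<noteq> v"
        using is_bottom_up_key_mono[OF bu True u] by auto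
      moreover have "bu_key f u \<noteq> bu_key f v"
        using bu_key_inj[OF u True] inj children_subset \<open>u \<noteq> v\<close>
        by (meson Diff_subset Un_least inj_on_subset)
      ultimately show "bu_key f u < bu_key f v"
        by simp
    qed (use is_bottom_up_key_mono[OF bu _ True] in simp)
    finally show ?thesis
      using True by (simp add: bu_rank_def)
  next
    case False
    with outside show ?thesis
      by (simp add: bu_rank_def)
  qed
qed

lemma ex1_bottom_up: "\<exists>!lo. is_bottom_up V E lab lo"
proof -
  obtain f where "bu_rank f = f"
    using bu_rank_fixpoint_exists by blast
  then show ?thesis
    using bu_rank_fixpoint_is_bottom_up is_bottom_up_bu_rank_fixpoint bu_rank_fixpoint_unique by blast
qed

lemma is_bottom_up_bottom_up: "is_bottom_up V E lab (bottom_up V E lab)"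
  unfolding bottom_up_def using ex1_bottom_up by (rule theI')

lemma bottom_up_children_range:
  assumes "c \<in> children E u"
  shows "bottom_up V E lab c \<in> {1..2 * n - 2}"
proof -
  let ?lo = "bottom_up V E lab"
  have c: "c \<in> V" "c \<noteq> root"
    using assms children_subset by auto
  have "?lo c < ?lo root"
    using is_bottom_up_bottom_up c root_in_V height_less_root[OF c]
    unfolding is_bottom_up_def by blast
  moreover have "1 \<le> ?lo c" "?lo root \<le> card V"
    using is_bottom_up_bottom_up c root_in_V unfolding is_bottom_up_def by auto
  ultimately show ?thesis
    using card_V_less by simp
qed

end

section \<open>The matching permutation\<close>

context phylogeny
begin

lemma swapidseq_match_perm: "swapidseq (n - 1) (match_perm V E lab)"
proof -
  let ?lo = "bottom_up V E lab"
  let ?I = "V - leaves V E"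
  let ?c = "\<lambda>k. card (children E (inv_into V ?lo k)) - 1"
  have inj: "inj_on ?lo V"
    using is_bottom_up_bottom_up unfolding is_bottom_up_def by blast
  have card_lo: "card (?lo ` children E u) = card (children E u)" for u
    using inj children_subset by (intro card_image) (auto intro: inj_on_subset)
  have "swapidseq (\<Sum>k\<leftarrow>sorted_list_of_set (?lo ` ?I). ?c k) (match_perm V E lab)"
    unfolding match_perm_def Let_def
  proof (rule swapidseq_foldr_comp)
    fix k
    have "swapidseq (card (?lo ` children E u) - 1) (kappa (?lo ` children E u))" for u
      using finite_children by (intro swapidseq_kappa) simp
    then show "swapidseq (?c k) (kappa (?lo ` children E (inv_into V ?lo k)))"
      unfolding card_lo .
  qed
  moreover have "(\<Sum>k\<leftarrow>sorted_list_of_set (?lo ` ?I). ?c k) = (\<Sum>k\<in>?lo ` ?I. ?c k)"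
    using finite_V by (simp add: sum_list_distinct_conv_sum_set)
  also have "\<dots> = (\<Sum>u\<in>?I. card (children E u) - 1)"
    using inj by (simp add: sum.reindex inj_on_subset[OF inj])
  also have "\<dots> = n - 1"
    by (rule sum_internal_children)
  finally show ?thesis
    by simp
qed

lemma match_perm_permutes: "match_perm V E lab permutes {1..2 * n - 2}"
  unfolding match_perm_def Let_def
proof (rule permutes_foldr_comp)
  let ?lo = "bottom_up V E lab"
  fix k
  have "kappa (?lo ` children E u) permutes ?lo ` children E u" for u
    using finite_children by (intro kappa_permutes) simp
  moreover have "?lo ` children E u \<subseteq> {1..2 * n - 2}" for u
    using bottom_up_children_range by auto
  ultimately show "kappa (?lo ` children E (inv_into V ?lo k)) permutes {1..2 * n - 2}"
    by (rule permutes_subset)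
qed

end

theorem proposition2:
  fixes n :: nat and V1 :: "'a set" and E1 :: "('a \<times> 'a) set" and lab1 :: "'a \<Rightarrow> nat"
    and V2 :: "'b set" and E2 :: "('b \<times> 'b) set" and lab2 :: "'b \<Rightarrow> nat"
  assumes "n \<ge> 2"
    and "phylo_tree n V1 E1 lab1"
    and "phylo_tree n V2 E2 lab2"
  shows "even (TD' n (V1, E1, lab1) (V2, E2, lab2)) \<and> TD' n (V1, E1, lab1) (V2, E2, lab2) < 2 * n - 2"
proof -
  obtain r1 r2 where T1: "phylogeny V1 E1 r1 n lab1" and T2: "phylogeny V2 E2 r2 n lab2"
    using assms(2,3) by (metis phylo_tree_imp_phylogeny)
  let ?p1 = "match_perm V1 E1 lab1" and ?p2 = "match_perm V2 E2 lab2"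
  have "inv ?p2 \<circ> ?p1 permutes {1..2 * n - 2}"
    using phylogeny.match_perm_permutes[OF T1] phylogeny.match_perm_permutes[OF T2]
    by (intro permutes_compose permutes_inv)
  moreover have "evenperm (inv ?p2 \<circ> ?p1)"
    using phylogeny.swapidseq_match_perm[OF T1] phylogeny.swapidseq_match_perm[OF T2]
    by (rule evenperm_inv_comp)
  ultimately show ?thesis
    using trans_dist_permutes assms(1) unfolding TD'_def by fastforce
qed

end
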